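(* Consider Janus Quicksort (JQuick), as described in the context, run on $n$ elements with distinct keys distributed over $p$ processes with $n/p$ elements each. A randomly selected input element takes part in more than $20\log_{8/7} p$ distributed levels of recursion before it becomes part of a base case with probability $O(p^{-7})$.
   Context: Janus Quicksort (JQuick) is a recursive distributed-memory sorting algorithm. The input is $n$ elements with pairwise distinct keys, distributed over $p$ processes numbered $0,\dots,p-1$ with exactly $n/p$ elements per process ($n$ a multiple of $p$). The algorithm maintains tasks; a task is a contiguous range of processes together with a contiguous range of the global sorted order of elements that these processes jointly hold, every process holding exactly $n/p$ elements in total, summed over all tasks it belongs to. A process may belong to two tasks at once (a "janus process"), and it then processes both simultaneously. One distributed level of recursion on a task performs four steps: (1) pivot selection: an element of the task chosen uniformly at random is broadcast to all processes of the task; (2) partitioning: each process splits its elements of the task into small elements (smaller than the pivot) and large elements (at least the pivot); (3) data assignment: using prefix sums and broadcasts, the small elements are assigned to a left group consisting of an initial segment of the task's processes and the large elements to a right group consisting of a final segment, such that every process again holds exactly $n/p$ elements in total; the two groups share at most one process (a janus process); (4) data exchange: elements are sent to their assigned processes. Then the left group recursively sorts the small elements and the right group the large elements. A task covering only one or two processes is a base case; base cases are not split further but sorted in a second phase (locally, or by exchanging data between the two processes, selecting, and sorting locally). Here $\log_{8/7}$ denotes logarithm to base $8/7$. *)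

theory Defs
  imports "HOL-Probability.Probability"
begin

text \<open>Keys are distinct, so elements are identified with their ranks 0..n-1.
  With q = n/p elements per process, a task is described by the rank range
  [l, r) of the elements it holds; by the data-assignment invariant of JQuick
  these elements occupy the global storage slots l..r-1, slot i belonging to
  process i div q.  A task is a base case iff it covers at most two processes.\<close>

definition jq_procs :: "nat \<Rightarrow> nat \<Rightarrow> nat \<Rightarrow> nat set" where
  "jq_procs q l r = (\<lambda>i. i div q) ` {l..<r}"

definition jq_base :: "nat \<Rightarrow> nat \<times> nat \<Rightarrow> bool" where
  "jq_base q t = (card (jq_procs q (fst t) (snd t)) \<le> 2)"

text \<open>One distributed level of recursion, followed from the task containing
  element x: a pivot rank k is chosen uniformly from the task; small elements
  (ranks l..k-1) go to the left subtask, large ones (ranks k..r-1) to the right.\<close>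

definition jq_step :: "nat \<Rightarrow> nat \<Rightarrow> nat \<times> nat \<Rightarrow> (nat \<times> nat) pmf" where
  "jq_step q x t =
     (if jq_base q t then return_pmf t
      else map_pmf (\<lambda>k. if x < k then (fst t, k) else (k, snd t))
                   (pmf_of_set {fst t..<snd t}))"

fun jq_task :: "nat \<Rightarrow> nat \<Rightarrow> nat \<Rightarrow> nat \<Rightarrow> (nat \<times> nat) pmf" where
  "jq_task n q x 0 = return_pmf (0, n)"
| "jq_task n q x (Suc d) = bind_pmf (jq_task n q x d) (jq_step q x)"

definition jq_random_elem_task :: "nat \<Rightarrow> nat \<Rightarrow> nat \<Rightarrow> (nat \<times> nat) pmf" where
  "jq_random_elem_task n p d =
     bind_pmf (pmf_of_set {..<n}) (\<lambda>x. jq_task n (n div p) x d)"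

end

theory Submission
  imports Defs
begin

text \<open>Weight the task containing x by its size if it is not a base case, and by 0 otherwise.
  A pivot of relative rank k, drawn uniformly from a task of size s, leaves x in a part of
  size at most max k (s - k), whose average over k is at most 7/8 s; base cases are
  absorbing, so the expected weight after d levels is at most (7/8)^d n.  A task that is
  not a base case covers at least three processes and hence has more than q = n/p elements, so
  by Markov's inequality it survives d levels with probability at most (7/8)^d p, which
  for d = \<lfloor>20 log (8/7) p\<rfloor> is at most (8/7) p^-19.\<close>

definition jq_weight :: "nat \<Rightarrow> nat \<times> nat \<Rightarrow> ennreal" where
  "jq_weight q t = (if jq_base q t then 0 else ennreal (real (snd t - fst t)))"

lemma not_jq_base_size_gt:
  assumes q: "q \<ge> 1" and nb: "\<not> jq_base q t"
  shows "q < snd t - fst t"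
proof (rule ccontr)
  assume "\<not> ?thesis"
  hence s: "snd t \<le> fst t + q" by simp
  have "jq_procs q (fst t) (snd t) \<subseteq> {fst t div q, fst t div q + 1}"
  proof
    fix a assume "a \<in> jq_procs q (fst t) (snd t)"
    then obtain i where i: "fst t \<le> i" "i < fst t + q" "a = i div q"
      using s unfolding jq_procs_def by auto
    have "i div q \<le> (fst t + q) div q" using i by (intro div_le_mono) simp
    also have "\<dots> = fst t div q + 1" using q by simp
    finally show "a \<in> {fst t div q, fst t div q + 1}"
      using i div_le_mono[of "fst t" i q] by auto
  qed
  hence "card (jq_procs q (fst t) (snd t)) \<le> card {fst t div q, fst t div q + 1}"
    by (rule card_mono[rotated]) simp
  also have "\<dots> \<le> 2" by (simp add: card_insert_if)
  finally show False using nb unfolding jq_base_def by simp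
qed

lemma sum_max_diff_le: "4 * (\<Sum>i<s. max i (s - i)) \<le> 3 * s\<^sup>2 + (s::nat)"
proof (induction s rule: nat_induct2)
  case (step s)
  have "(\<Sum>i<Suc (Suc s). max i (Suc (Suc s) - i))
      = Suc (Suc s) + (\<Sum>i<s. max (Suc i) (Suc (Suc s) - Suc i)) + Suc s"
    using sum.lessThan_Suc[of "\<lambda>i. max i (Suc (Suc s) - i)" "Suc s"]
      sum.lessThan_Suc_shift[of "\<lambda>i. max i (Suc (Suc s) - i)" s] by simp
  also have "(\<Sum>i<s. max (Suc i) (Suc (Suc s) - Suc i)) = (\<Sum>i<s. max i (s - i) + 1)"
    by (rule sum.cong) auto
  also have "\<dots> = (\<Sum>i<s. max i (s - i)) + s"
    by (subst sum.distrib) simp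
  finally have "(\<Sum>i<Suc (Suc s). max i (Suc (Suc s) - i)) = (\<Sum>i<s. max i (s - i)) + 3 * s + 3"
    by simp
  then show ?case using step by (simp add: power2_eq_square)
qed simp_all

lemma sum_max_split_ivl_le:
  fixes l r :: nat
  assumes "l + 2 \<le> r"
  shows "8 * (\<Sum>k\<in>{l..<r}. max (k - l) (r - k)) \<le> 7 * (r - l)\<^sup>2"
proof -
  have "(\<Sum>k\<in>{l..<r}. max (k - l) (r - k)) = (\<Sum>i\<in>{0..<r - l}. max (i + l - l) (r - (i + l)))"
    using sum.shift_bounds_nat_ivl[of "\<lambda>k. max (k - l) (r - k)" 0 l "r - l"] assms by simp
  also have "\<dots> = (\<Sum>i<r - l. max i ((r - l) - i))"
    by (rule sum.cong) auto
  finally have "(\<Sum>k\<in>{l..<r}. max (k - l) (r - k)) = (\<Sum>i<r - l. max i ((r - l) - i))" .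
  moreover have "2 * (r - l) \<le> (r - l)\<^sup>2" using assms by (simp add: power2_eq_square)
  ultimately show ?thesis using sum_max_diff_le[of "r - l"] by linarith
qed

lemma nn_integral_jq_step_weight_le:
  assumes q: "q \<ge> 1"
  shows "(\<integral>\<^sup>+u. jq_weight q u \<partial>jq_step q x t) \<le> ennreal (7/8) * jq_weight q t"
proof (cases "jq_base q t")
  case True
  then show ?thesis by (simp add: jq_step_def jq_weight_def)
next
  case False
  obtain l r where t: "t = (l, r)" by (cases t)
  have lr: "l + 2 \<le> r" using not_jq_base_size_gt[OF q False] q t by simp
  define S where "S = (\<Sum>k\<in>{l..<r}. max (k - l) (r - k))"
  have "real (8 * S) \<le> real (7 * (r - l)\<^sup>2)"
    unfolding S_def of_nat_le_iff by (rule sum_max_split_ivl_le[OF lr])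
  hence "8 * real S \<le> 7 * real (r - l) * real (r - l)"
    by (simp add: power2_eq_square)
  hence S: "real S / real (r - l) \<le> 7/8 * real (r - l)"
    using lr by (simp add: pos_divide_le_eq)
  have "(\<integral>\<^sup>+u. jq_weight q u \<partial>jq_step q x t)
      = (\<integral>\<^sup>+k. jq_weight q (if x < k then (l, k) else (k, r)) \<partial>pmf_of_set {l..<r})"
    using False unfolding t jq_step_def by (simp cong: if_cong)
  also have "\<dots> \<le> (\<integral>\<^sup>+k. ennreal (real (max (k - l) (r - k))) \<partial>pmf_of_set {l..<r})"
    by (rule nn_integral_mono) (auto simp: jq_weight_def)
  also have "\<dots> = ennreal (real S) / ennreal (real (r - l))"
    using lr by (subst nn_integral_pmf_of_set) (auto simp: S_def ennreal_of_nat_eq_real_of_nat)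
  also have "\<dots> = ennreal (real S / real (r - l))"
    using lr by (intro divide_ennreal) auto
  also have "\<dots> \<le> ennreal (7/8) * ennreal (real (r - l))"
    using S by (simp add: ennreal_mult[symmetric] ennreal_leI)
  also have "\<dots> = ennreal (7/8) * jq_weight q t"
    using False t by (simp add: jq_weight_def)
  finally show ?thesis .
qed

lemma nn_integral_jq_task_weight_le:
  assumes q: "q \<ge> 1"
  shows "(\<integral>\<^sup>+u. jq_weight q u \<partial>jq_task n q x d) \<le> ennreal ((7/8)^d * real n)"
proof (induction d)
  case 0
  then show ?case by (simp add: jq_weight_def)
next
  case (Suc d)
  have "(\<integral>\<^sup>+u. jq_weight q u \<partial>jq_task n q x (Suc d))
      = (\<integral>\<^sup>+t. (\<integral>\<^sup>+u. jq_weight q u \<partial>jq_step q x t) \<partial>jq_task n q x d)" by simp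
  also have "\<dots> \<le> (\<integral>\<^sup>+t. ennreal (7/8) * jq_weight q t \<partial>jq_task n q x d)"
    by (intro nn_integral_mono nn_integral_jq_step_weight_le[OF q])
  also have "\<dots> = ennreal (7/8) * (\<integral>\<^sup>+t. jq_weight q t \<partial>jq_task n q x d)"
    by (rule nn_integral_cmult) simp
  also have "\<dots> \<le> ennreal (7/8) * ennreal ((7/8)^d * real n)"
    by (intro mult_left_mono Suc) simp
  also have "\<dots> = ennreal ((7/8)^Suc d * real n)"
    by (simp add: ennreal_mult[symmetric] mult.assoc)
  finally show ?case .
qed

lemma emeasure_not_jq_base_le:
  assumes q: "q \<ge> 1"
  shows "ennreal (real (q + 1)) * emeasure (measure_pmf M) {t. \<not> jq_base q t}
    \<le> (\<integral>\<^sup>+u. jq_weight q u \<partial>M)"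
proof -
  have "ennreal (real (q + 1)) * emeasure (measure_pmf M) {t. \<not> jq_base q t}
     = (\<integral>\<^sup>+u. ennreal (real (q + 1)) * indicator {t. \<not> jq_base q t} u \<partial>M)"
    by (rule nn_integral_cmult_indicator[symmetric]) simp
  also have "\<dots> \<le> (\<integral>\<^sup>+u. jq_weight q u \<partial>M)"
  proof (intro nn_integral_mono)
    fix u
    have "ennreal (real (q + 1)) \<le> ennreal (real (snd u - fst u))" if "\<not> jq_base q u"
      using not_jq_base_size_gt[OF q that] by (intro ennreal_leI) simp
    then show "ennreal (real (q + 1)) * indicator {t. \<not> jq_base q t} u \<le> jq_weight q u"
      by (simp add: jq_weight_def indicator_def)
  qed
  finally show ?thesis .
qed

lemma prob_not_jq_base_le:
  assumes n: "n > 0" and dvd: "p dvd n"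
  shows "measure_pmf.prob (jq_random_elem_task n p d) {t. \<not> jq_base (n div p) t}
    \<le> (7/8)^d * real p"
proof -
  define q where "q = n div p"
  define P where "P = measure_pmf.prob (jq_random_elem_task n p d) {t. \<not> jq_base q t}"
  have n_eq: "n = p * q" unfolding q_def using dvd by simp
  hence q: "q \<ge> 1" using n by (cases q) auto
  have "ennreal (real (q + 1) * P)
      = ennreal (real (q + 1)) * emeasure (measure_pmf (jq_random_elem_task n p d)) {t. \<not> jq_base q t}"
    unfolding P_def by (simp add: measure_pmf.emeasure_eq_measure ennreal_mult)
  also have "\<dots> \<le> (\<integral>\<^sup>+u. jq_weight q u \<partial>jq_random_elem_task n p d)"
    by (rule emeasure_not_jq_base_le[OF q])
  also have "\<dots> = (\<integral>\<^sup>+x. (\<integral>\<^sup>+u. jq_weight q u \<partial>jq_task n q x d) \<partial>pmf_of_set {..<n})"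
    unfolding jq_random_elem_task_def q_def by simp
  also have "\<dots> \<le> (\<integral>\<^sup>+x. ennreal ((7/8)^d * real n) \<partial>pmf_of_set {..<n})"
    by (intro nn_integral_mono nn_integral_jq_task_weight_le[OF q])
  also have "\<dots> = ennreal ((7/8)^d * real n)"
    by (simp add: measure_pmf.emeasure_space_1)
  finally have "real (q + 1) * P \<le> (7/8)^d * real p * real q"
    by (simp add: ennreal_le_iff n_eq mult_ac)
  also have "\<dots> \<le> (7/8)^d * real p * real (q + 1)"
    by (intro mult_left_mono) simp_all
  finally show ?thesis
    unfolding P_def q_def by (simp add: mult.commute)
qed

lemma powr_le_power_Suc_floor_log:
  fixes b x c :: real
  assumes b: "b > 1" and x: "x \<ge> 1" and c: "c \<ge> 0"
  shows "x powr c \<le> b ^ Suc (nat \<lfloor>c * log b x\<rfloor>)"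
proof -
  define k where "k = Suc (nat \<lfloor>c * log b x\<rfloor>)"
  have "c * log b x \<ge> 0" using assms by simp
  hence "c * log b x \<le> real k" unfolding k_def by linarith
  have "x powr c = b powr (c * log b x)"
    using b x by (simp add: mult.commute[of c] powr_powr[symmetric])
  also have "\<dots> \<le> b powr real k"
    using b \<open>c * log b x \<le> real k\<close> by (intro powr_mono) auto
  also have "\<dots> = b ^ k"
    using b by (simp add: powr_realpow)
  finally show ?thesis unfolding k_def .
qed

theorem lemma1:
  "\<exists>C::real. \<forall>(n::nat) (p::nat). p \<ge> 1 \<longrightarrow> n > 0 \<longrightarrow> p dvd n \<longrightarrow>
     measure_pmf.prob
       (jq_random_elem_task n p (nat \<lfloor>20 * log (8/7) (real p)\<rfloor>))
       {t. \<not> jq_base (n div p) t}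
     \<le> C / real p ^ 7"
proof (intro exI allI impI)
  fix n p :: nat
  assume p: "p \<ge> 1" and n: "n > 0" and dvd: "p dvd n"
  define d where "d = nat \<lfloor>20 * log (8/7) (real p)\<rfloor>"
  have "real p ^ 20 \<le> (8/7) ^ Suc d"
    using powr_le_power_Suc_floor_log[of "8/7" "real p" 20] p
    unfolding d_def by (simp add: powr_realpow)
  hence pow20: "(7/8)^d * real p ^ 20 \<le> 8/7"
    by (simp add: field_simps)
  have "real p * real p ^ 7 \<le> real p ^ 20"
    using p by (simp add: power_Suc[symmetric] power_increasing del: power_Suc)
  hence "(7/8)^d * real p * real p ^ 7 \<le> (7/8)^d * real p ^ 20"
    unfolding mult.assoc by (rule mult_left_mono) simp
  also note pow20
  finally have "(7/8)^d * real p \<le> (8/7) / real p ^ 7"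
    using p by (simp add: pos_le_divide_eq)
  with prob_not_jq_base_le[OF n dvd, of d]
  show "measure_pmf.prob (jq_random_elem_task n p (nat \<lfloor>20 * log (8/7) (real p)\<rfloor>))
       {t. \<not> jq_base (n div p) t} \<le> (8/7) / real p ^ 7"
    unfolding d_def by linarith
qed

end
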